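(* Let $X$ be a random variable with survival function $\overline{F}(x) = \mathbb{P}(X > x)$ given by $\overline{F}(x) = 1$ for $x < 0$ and $\overline{F}(x) = (\lfloor x \rfloor + 2)^{-1}$ for $x \geq 0$. For $n \geq 2$ let $X_1, \dots, X_n$ be i.i.d. copies of $X$ and $\overline{X}_n = \frac{1}{n}\sum_{i=1}^n X_i$. Then $X \leq_{\mathrm{st}} \overline{X}_n$ for all $n \geq 2$.
   Context: For random variables $X, Y$, $X \leq_{\mathrm{st}} Y$ means $\mathbb{P}(X > x) \leq \mathbb{P}(Y > x)$ for all $x \in \mathbb{R}$. *)

theory Defs
  imports "HOL-Probability.Probability"
begin

definition surv_ex :: "real \<Rightarrow> real" where
  "surv_ex x = (if x < 0 then 1 else 1 / (real_of_int \<lfloor>x\<rfloor> + 2))"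

definition st_le :: "'a measure \<Rightarrow> ('a \<Rightarrow> real) \<Rightarrow> ('a \<Rightarrow> real) \<Rightarrow> bool" where
  "st_le M X Y \<longleftrightarrow> (\<forall>x::real. measure M {\<omega> \<in> space M. X \<omega> > x} \<le> measure M {\<omega> \<in> space M. Y \<omega> > x})"

end

theory Submission
  imports Defs
begin

text \<open>
  Write \<open>F = surv_ex\<close>. Since \<open>X \<ge> 0\<close> almost surely, the sample mean exceeds \<open>x\<close> as soon as
  one of the \<open>X\<^sub>i\<close> exceeds \<open>n x\<close>, so by independence it exceeds \<open>x\<close> with probability at
  least \<open>1 - (1 - F(n x))\<^sup>n\<close>. With \<open>b = \<lfloor>x\<rfloor> + 1\<close> we have \<open>1 - F(n x) \<le> n b / (n b + 1)\<close>,
  and Bernoulli's inequality \<open>(1 + 1/(n b))\<^sup>n \<ge> 1 + 1/b\<close> turns this into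
  \<open>(1 - F(n x))\<^sup>n \<le> 1 - F(x)\<close>.
\<close>

lemma power_mult_div_add_one_le:
  fixes b :: real and n :: nat
  assumes "0 < b" and "n \<ge> 1"
  shows "(real n * b / (real n * b + 1)) ^ n \<le> b / (b + 1)"
proof -
  define N where "N = real n * b"
  have "N > 0" using assms unfolding N_def by simp
  have "(b + 1) / b = 1 + real n * (1 / N)"
    using assms unfolding N_def by (simp add: field_simps)
  also have "\<dots> \<le> (1 + 1 / N) ^ n"
    using \<open>N > 0\<close> by (intro Bernoulli_inequality) (smt (verit) divide_pos_pos)
  also have "\<dots> = ((N + 1) / N) ^ n"
    using \<open>N > 0\<close> by (simp add: field_simps)
  finally have "1 / ((N + 1) / N) ^ n \<le> 1 / ((b + 1) / b)"
    using assms \<open>N > 0\<close> by (intro divide_left_mono mult_pos_pos) auto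
  then show ?thesis
    unfolding N_def by (simp add: power_divide)
qed

lemma surv_ex_le_max_tail:
  fixes n :: nat
  assumes "n \<ge> 1"
  shows "surv_ex x \<le> 1 - (1 - surv_ex (real n * x)) ^ n"
proof (cases "x < 0")
  case True
  then have "real n * x < 0" using assms by (simp add: mult_pos_neg)
  with True assms show ?thesis by (simp add: surv_ex_def power_0_left)
next
  case False
  then have "\<not> real n * x < 0" by (simp add: not_less)
  define b where "b = real_of_int \<lfloor>x\<rfloor> + 1"
  define k where "k = real_of_int \<lfloor>real n * x\<rfloor> + 1"
  have "b \<ge> 1" "k \<ge> 1"
    using False assms unfolding b_def k_def by auto
  have "real n * x < real n * b"
    using assms unfolding b_def by (intro mult_strict_left_mono) (linarith, simp)
  then have "\<lfloor>real n * x\<rfloor> < int n * (\<lfloor>x\<rfloor> + 1)"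
    unfolding b_def by (simp add: floor_less_iff)
  then have "\<lfloor>real n * x\<rfloor> + 1 \<le> int n * (\<lfloor>x\<rfloor> + 1)"
    by simp
  then have "real_of_int (\<lfloor>real n * x\<rfloor> + 1) \<le> real_of_int (int n * (\<lfloor>x\<rfloor> + 1))"
    by (rule of_int_le_iff[THEN iffD2])
  then have "k \<le> real n * b"
    unfolding k_def b_def by simp
  then have "k / (k + 1) \<le> real n * b / (real n * b + 1)"
    using \<open>k \<ge> 1\<close> by (simp add: field_simps)
  then have "(k / (k + 1)) ^ n \<le> (real n * b / (real n * b + 1)) ^ n"
    using \<open>k \<ge> 1\<close> by (intro power_mono) auto
  also have "\<dots> \<le> b / (b + 1)"
    using \<open>b \<ge> 1\<close> assms by (intro power_mult_div_add_one_le) auto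
  finally have "(k / (k + 1)) ^ n \<le> b / (b + 1)" .
  moreover have "surv_ex (real n * x) = 1 / (k + 1)"
    using \<open>\<not> real n * x < 0\<close> unfolding surv_ex_def k_def by (simp add: add.commute)
  then have "1 - surv_ex (real n * x) = k / (k + 1)"
    using \<open>k \<ge> 1\<close> by (simp add: field_simps)
  moreover have "surv_ex x = 1 / (b + 1)"
    using False unfolding surv_ex_def b_def by (simp add: add.commute)
  then have "surv_ex x = 1 - b / (b + 1)"
    using \<open>b \<ge> 1\<close> by (simp add: field_simps)
  ultimately show ?thesis by simp
qed

context prob_space
begin

lemma AE_ge_if_prob_gt_eq_1:
  fixes a :: real
  assumes "random_variable borel X"
    and "\<And>x. x < a \<Longrightarrow> prob {\<omega> \<in> space M. X \<omega> > x} = 1"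
  shows "AE \<omega> in M. X \<omega> \<ge> a"
proof -
  have "AE \<omega> in M. X \<omega> > a - 1 / Suc k" for k
    using assms by (subst prob_Collect_eq_1[symmetric]) auto
  then have "AE \<omega> in M. \<forall>k. X \<omega> > a - 1 / Suc k"
    by (simp add: AE_all_countable)
  then show ?thesis
  proof eventually_elim
    case (elim \<omega>)
    show "X \<omega> \<ge> a"
    proof (rule ccontr)
      assume "\<not> X \<omega> \<ge> a"
      then obtain k where "1 / Suc k < a - X \<omega>"
        using reals_Archimedean by (metis diff_gt_0_iff_gt inverse_eq_divide not_le)
      with elim show False by (smt (verit))
    qed
  qed
qed

lemma prob_gt_eq_if_distr_eq:
  fixes X Y :: "'a \<Rightarrow> real"
  assumes "random_variable borel X" "random_variable borel Y"
    and "distr M borel X = distr M borel Y"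
  shows "prob {\<omega> \<in> space M. X \<omega> > t} = prob {\<omega> \<in> space M. Y \<omega> > t}"
proof -
  have "{\<omega> \<in> space M. Z \<omega> > t} = Z -` {t<..} \<inter> space M" for Z :: "'a \<Rightarrow> real"
    by auto
  then show ?thesis
    using assms by (simp add: measure_distr[symmetric])
qed

lemma prob_exists_gt_indep:
  fixes X :: "'i \<Rightarrow> 'a \<Rightarrow> real"
  assumes "indep_vars (\<lambda>_. borel) X I" and "finite I"
  shows "prob {\<omega> \<in> space M. \<exists>i\<in>I. X i \<omega> > t} = 1 - (\<Prod>i\<in>I. 1 - prob {\<omega> \<in> space M. X i \<omega> > t})"
proof (cases "I = {}")
  case False
  have meas: "X i -` A \<inter> space M \<in> events" if "i \<in> I" "A \<in> sets borel" for i A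
    using assms(1) that unfolding indep_vars_def by (auto intro: measurable_sets)
  have "{\<omega> \<in> space M. \<exists>i\<in>I. X i \<omega> > t} = space M - (\<Inter>i\<in>I. X i -` {..t} \<inter> space M)"
    using False by (auto simp: not_le)
  moreover have "prob (\<Inter>i\<in>I. X i -` {..t} \<inter> space M) = (\<Prod>i\<in>I. prob (X i -` {..t} \<inter> space M))"
    using False assms by (intro indep_varsD_finite) auto
  moreover have "prob (X i -` {..t} \<inter> space M) = 1 - prob {\<omega> \<in> space M. X i \<omega> > t}"
    if "i \<in> I" for i
  proof -
    have "X i -` {..t} \<inter> space M = space M - (X i -` {t<..} \<inter> space M)" by auto
    then show ?thesis
      using prob_compl[OF meas[OF that, of "{t<..}"]] by (simp add: vimage_def Int_def conj_commute)
  qed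
  moreover have "(\<Inter>i\<in>I. X i -` {..t} \<inter> space M) \<in> events"
    using False assms(2) meas by (intro sets.finite_INT) auto
  ultimately show ?thesis
    by (simp add: prob_compl)
qed simp

lemma prob_exists_gt_le_prob_sum_gt:
  fixes X :: "'i \<Rightarrow> 'a \<Rightarrow> real"
  assumes "finite I" and "\<And>i. i \<in> I \<Longrightarrow> random_variable borel (X i)"
    and "AE \<omega> in M. \<forall>i\<in>I. X i \<omega> \<ge> 0"
  shows "prob {\<omega> \<in> space M. \<exists>i\<in>I. X i \<omega> > t} \<le> prob {\<omega> \<in> space M. (\<Sum>i\<in>I. X i \<omega>) > t}"
proof (rule finite_measure_mono_AE)
  show "AE \<omega> in M. \<omega> \<in> {\<omega> \<in> space M. \<exists>i\<in>I. X i \<omega> > t} \<longrightarrow> \<omega> \<in> {\<omega> \<in> space M. (\<Sum>i\<in>I. X i \<omega>) > t}"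
    using assms(3)
  proof eventually_elim
    case (elim \<omega>)
    show ?case
    proof
      assume "\<omega> \<in> {\<omega> \<in> space M. \<exists>i\<in>I. X i \<omega> > t}"
      then obtain i where "i \<in> I" "\<omega> \<in> space M" "X i \<omega> > t" by blast
      moreover have "X i \<omega> \<le> (\<Sum>i\<in>I. X i \<omega>)"
        using elim assms(1) \<open>i \<in> I\<close> by (intro member_le_sum) auto
      ultimately show "\<omega> \<in> {\<omega> \<in> space M. (\<Sum>i\<in>I. X i \<omega>) > t}" by simp
    qed
  qed
  show "{\<omega> \<in> space M. (\<Sum>i\<in>I. X i \<omega>) > t} \<in> events"
    using assms(2) by measurable
qed

end

theorem proposition2:
  fixes M :: "'a measure" and X :: "'a \<Rightarrow> real" and Xs :: "nat \<Rightarrow> 'a \<Rightarrow> real" and n :: nat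
  assumes "prob_space M"
    and "X \<in> borel_measurable M"
    and "\<And>x. measure M {\<omega> \<in> space M. X \<omega> > x} = surv_ex x"
    and "n \<ge> 2"
    and "prob_space.indep_vars M (\<lambda>_. borel) Xs {1..n}"
    and "\<And>i. i \<in> {1..n} \<Longrightarrow> distr M borel (Xs i) = distr M borel X"
  shows "st_le M X (\<lambda>\<omega>. (\<Sum>i=1..n. Xs i \<omega>) / real n)"
proof -
  interpret prob_space M by fact
  have meas: "random_variable borel (Xs i)" if "i \<in> {1..n}" for i
    using assms(5) that unfolding indep_vars_def by auto
  have surv: "prob {\<omega> \<in> space M. Xs i \<omega> > t} = surv_ex t" if "i \<in> {1..n}" for i t
    using prob_gt_eq_if_distr_eq[OF meas[OF that] assms(2) assms(6)[OF that]] assms(3) by simp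
  have nonneg: "AE \<omega> in M. \<forall>i\<in>{1..n}. Xs i \<omega> \<ge> 0"
    using meas surv by (intro AE_ball_countable' AE_ge_if_prob_gt_eq_1) (auto simp: surv_ex_def)
  have "prob {\<omega> \<in> space M. X \<omega> > x} \<le> prob {\<omega> \<in> space M. (\<Sum>i=1..n. Xs i \<omega>) / real n > x}" for x
  proof -
    have "prob {\<omega> \<in> space M. X \<omega> > x} \<le> 1 - (1 - surv_ex (real n * x)) ^ n"
      using assms(3,4) surv_ex_le_max_tail[of n x] by simp
    also have "\<dots> = prob {\<omega> \<in> space M. \<exists>i\<in>{1..n}. Xs i \<omega> > real n * x}"
      using prob_exists_gt_indep[OF assms(5)] surv by simp
    also have "\<dots> \<le> prob {\<omega> \<in> space M. (\<Sum>i=1..n. Xs i \<omega>) > real n * x}"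
      using meas nonneg by (intro prob_exists_gt_le_prob_sum_gt) auto
    also have "\<dots> = prob {\<omega> \<in> space M. (\<Sum>i=1..n. Xs i \<omega>) / real n > x}"
      using assms(4) by (simp add: field_simps)
    finally show ?thesis .
  qed
  then show ?thesis
    unfolding st_le_def by simp
qed

end
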